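(* Let $H[A,B]$ be a connected bipartite cubic graph, $a\in A$, $b\in B$. Then $(a,b)$ is not $\lambda$-matchable if and only if exactly one of the following holds: (i) there is a unique edge joining $a$ and $b$, and it belongs to some $2$-cut of $H$; or (ii) $a$ and $b$ are nonadjacent and there is a tight cut $\partial(X)$ with $a\in X^-$ and $b\in\overline{X}^-$.
   Context: Graphs are loopless but may have parallel edges. For a connected bipartite cubic graph $H[A,B]$, $a\in A$, $b\in B$, an $(a,b)$-matching is a spanning subgraph in which $a,b$ have degree $3$ and every other vertex degree $1$; $(a,b)$ is $\lambda$-matchable if one exists. A cut $C$ is tight if $|C\cap M|=1$ for every perfect matching $M$. For an odd cut $\partial(X)$ of $H[A,B]$, $X^+$ and $X^-$ are the larger and smaller of $X\cap A$ and $X\cap B$; $\overline{X}^+,\overline{X}^-$ are defined analogously for $\overline{X}=V(H)-X$. A $2$-cut is a cut with exactly two edges. *)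

theory Defs
  imports Main
begin

text \<open>A (finite, loopless) multigraph: vertex set V, edge set E (edges are abstract
  objects, so parallel edges are allowed), and an endpoint map ends giving each edge
  a two-element set of vertices.\<close>

definition multigraph :: "'v set \<Rightarrow> 'e set \<Rightarrow> ('e \<Rightarrow> 'v set) \<Rightarrow> bool" where
  "multigraph V E ends \<longleftrightarrow> finite V \<and> finite E \<and>
     (\<forall>e\<in>E. ends e \<subseteq> V \<and> card (ends e) = 2)"

definition deg :: "'e set \<Rightarrow> ('e \<Rightarrow> 'v set) \<Rightarrow> 'v \<Rightarrow> nat" where
  "deg F ends v = card {e\<in>F. v \<in> ends e}"

definition adj_rel :: "'v set \<Rightarrow> 'e set \<Rightarrow> ('e \<Rightarrow> 'v set) \<Rightarrow> ('v \<times> 'v) set" where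
  "adj_rel V E ends = {(u, v). u \<in> V \<and> v \<in> V \<and> (\<exists>e\<in>E. ends e = {u, v})}"

definition connected_graph :: "'v set \<Rightarrow> 'e set \<Rightarrow> ('e \<Rightarrow> 'v set) \<Rightarrow> bool" where
  "connected_graph V E ends \<longleftrightarrow> V \<noteq> {} \<and>
     (\<forall>u\<in>V. \<forall>v\<in>V. (u, v) \<in> (adj_rel V E ends)\<^sup>*)"

definition cubic :: "'v set \<Rightarrow> 'e set \<Rightarrow> ('e \<Rightarrow> 'v set) \<Rightarrow> bool" where
  "cubic V E ends \<longleftrightarrow> (\<forall>v\<in>V. deg E ends v = 3)"

definition bipartite_on :: "'v set \<Rightarrow> 'e set \<Rightarrow> ('e \<Rightarrow> 'v set) \<Rightarrow> 'v set \<Rightarrow> 'v set \<Rightarrow> bool" where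
  "bipartite_on V E ends A B \<longleftrightarrow> A \<union> B = V \<and> A \<inter> B = {} \<and>
     (\<forall>e\<in>E. card (ends e \<inter> A) = 1 \<and> card (ends e \<inter> B) = 1)"

definition cut :: "'e set \<Rightarrow> ('e \<Rightarrow> 'v set) \<Rightarrow> 'v set \<Rightarrow> 'e set" where
  "cut E ends X = {e\<in>E. card (ends e \<inter> X) = 1}"

definition perfect_matching :: "'v set \<Rightarrow> 'e set \<Rightarrow> ('e \<Rightarrow> 'v set) \<Rightarrow> 'e set \<Rightarrow> bool" where
  "perfect_matching V E ends M \<longleftrightarrow> M \<subseteq> E \<and> (\<forall>v\<in>V. deg M ends v = 1)"

definition tight_cut :: "'v set \<Rightarrow> 'e set \<Rightarrow> ('e \<Rightarrow> 'v set) \<Rightarrow> 'e set \<Rightarrow> bool" where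
  "tight_cut V E ends C \<longleftrightarrow> (\<exists>X\<subseteq>V. C = cut E ends X) \<and>
     (\<forall>M. perfect_matching V E ends M \<longrightarrow> card (C \<inter> M) = 1)"

definition two_cut :: "'v set \<Rightarrow> 'e set \<Rightarrow> ('e \<Rightarrow> 'v set) \<Rightarrow> 'e set \<Rightarrow> bool" where
  "two_cut V E ends C \<longleftrightarrow> (\<exists>X\<subseteq>V. C = cut E ends X) \<and> card C = 2"

definition ab_matching :: "'v set \<Rightarrow> 'e set \<Rightarrow> ('e \<Rightarrow> 'v set) \<Rightarrow> 'v \<Rightarrow> 'v \<Rightarrow> 'e set \<Rightarrow> bool" where
  "ab_matching V E ends a b F \<longleftrightarrow> F \<subseteq> E \<and> deg F ends a = 3 \<and> deg F ends b = 3 \<and>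
     (\<forall>v\<in>V - {a, b}. deg F ends v = 1)"

definition lambda_matchable :: "'v set \<Rightarrow> 'e set \<Rightarrow> ('e \<Rightarrow> 'v set) \<Rightarrow> 'v \<Rightarrow> 'v \<Rightarrow> bool" where
  "lambda_matchable V E ends a b \<longleftrightarrow> (\<exists>F. ab_matching V E ends a b F)"

text \<open>For an odd cut \<open>\<partial>(X)\<close> in H[A,B]: \<open>X\<^sup>-\<close> is the smaller of \<open>X \<inter> A\<close>, \<open>X \<inter> B\<close>,
  \<open>X\<^sup>+\<close> the larger (well defined since |X| odd and |A| = |B|).\<close>
definition minus_side :: "'v set \<Rightarrow> 'v set \<Rightarrow> 'v set \<Rightarrow> 'v set" where
  "minus_side A B X = (if card (X \<inter> A) < card (X \<inter> B) then X \<inter> A else X \<inter> B)"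

definition plus_side :: "'v set \<Rightarrow> 'v set \<Rightarrow> 'v set \<Rightarrow> 'v set" where
  "plus_side A B X = (if card (X \<inter> A) < card (X \<inter> B) then X \<inter> B else X \<inter> A)"

end

theory Submission
  imports Defs
begin

text \<open>An (a,b)-matching must contain all edges at a and b, so it exists iff these edges lead to
  distinct vertices and the vertices not adjacent to a or b admit a perfect matching. When Hall's
  condition fails there, a deficient set T \<subseteq> A - {a} yields, by counting the edges leaving
  X = {a} \<union> T \<union> (N({a} \<union> T) - {b}) in the cubic graph, either a 2-cut through the edge ab or
  a shore of a tight cut separating a from b. Conversely, for any X containing a but not b, the
  degrees of an (a,b)-matching force more edges out of the A-side of X than a 2-cut through ab,
  or a tight cut, can provide.\<close>

lemma hall_condition_Diff_critical:
  fixes L :: "'a set" and N :: "'a \<Rightarrow> 'b set"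
  assumes hall: "\<forall>S\<subseteq>L. card S \<le> card (\<Union>(N ` S))"
    and fin: "finite L" "\<forall>x\<in>L. finite (N x)"
    and T: "T \<subseteq> L" "card T = card (\<Union>(N ` T))"
  shows "\<forall>S\<subseteq>L - T. card S \<le> card (\<Union>x\<in>S. N x - \<Union>(N ` T))"
proof (intro allI impI)
  fix S assume S: "S \<subseteq> L - T"
  have "finite S" "finite T" using S T(1) fin(1) finite_subset by blast+
  have "card S + card T = card (S \<union> T)"
    using S \<open>finite S\<close> \<open>finite T\<close> by (intro card_Un_disjoint[symmetric]) auto
  also have "\<dots> \<le> card (\<Union>(N ` (S \<union> T)))" using hall S T(1) by blast
  also have "\<Union>(N ` (S \<union> T)) = (\<Union>x\<in>S. N x - \<Union>(N ` T)) \<union> \<Union>(N ` T)" by blast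
  also have "card \<dots> \<le> card (\<Union>x\<in>S. N x - \<Union>(N ` T)) + card T"
    by (simp only: T(2) card_Un_le)
  finally show "card S \<le> card (\<Union>x\<in>S. N x - \<Union>(N ` T))" by simp
qed

lemma hall_condition_Diff_singleton:
  fixes L :: "'a set" and N :: "'a \<Rightarrow> 'b set"
  assumes surplus: "\<forall>S\<subseteq>L. S \<noteq> {} \<longrightarrow> S \<noteq> L \<longrightarrow> card S < card (\<Union>(N ` S))"
    and fin: "finite L" "\<forall>x\<in>L. finite (N x)" and "x \<in> L"
  shows "\<forall>S\<subseteq>L - {x}. card S \<le> card (\<Union>z\<in>S. N z - {y})"
proof (intro allI impI)
  fix S assume S: "S \<subseteq> L - {x}"
  show "card S \<le> card (\<Union>z\<in>S. N z - {y})"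
  proof (cases "S = {}")
    case False
    have "finite (\<Union>(N ` S))" using S fin finite_subset[of S L] by auto
    have "card S < card (\<Union>(N ` S))" using surplus S False \<open>x \<in> L\<close> by blast
    also have "\<dots> \<le> card (\<Union>(N ` S) - {y}) + 1"
      using \<open>finite (\<Union>(N ` S))\<close> by (cases "y \<in> \<Union>(N ` S)") (auto simp: card_Diff_singleton)
    also have "\<Union>(N ` S) - {y} = (\<Union>z\<in>S. N z - {y})" by blast
    finally show ?thesis by simp
  qed simp
qed

lemma representatives_Un:
  assumes "T \<subseteq> L" "inj_on f T" "\<forall>x\<in>T. f x \<in> N x"
    and "inj_on g (L - T)" "\<forall>x\<in>L - T. g x \<in> N x - \<Union>(N ` T)"
  shows "\<exists>h. inj_on h L \<and> (\<forall>x\<in>L. h x \<in> N x)"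
proof -
  define h where "h x = (if x \<in> T then f x else g x)" for x
  have "inj_on h T" "inj_on h (L - T)" using assms(2,4) by (auto simp: h_def inj_on_def)
  moreover have "h ` (T - (L - T)) \<inter> h ` ((L - T) - T) = {}" using assms(3,5) by (auto simp: h_def)
  ultimately have "inj_on h (T \<union> (L - T))" by (simp only: inj_on_Un)
  moreover have "T \<union> (L - T) = L" using assms(1) by blast
  moreover have "\<forall>x\<in>L. h x \<in> N x" using assms(3,5) by (simp add: h_def)
  ultimately show ?thesis by auto
qed

lemma representatives_insert:
  assumes "x \<in> L" "y \<in> N x" "inj_on g (L - {x})" "\<forall>z\<in>L - {x}. g z \<in> N z - {y}"
  shows "\<exists>h. inj_on h L \<and> (\<forall>z\<in>L. h z \<in> N z)"
proof -
  have "inj_on (g(x := y)) (L - {x})" "y \<notin> g(x := y) ` (L - {x})"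
    using assms(3,4) by (auto simp: inj_on_def)
  then have "inj_on (g(x := y)) (insert x (L - {x}))" unfolding inj_on_insert by simp
  moreover have "insert x (L - {x}) = L" using assms(1) by blast
  moreover have "\<forall>z\<in>L. (g(x := y)) z \<in> N z" using assms(2,4) by auto
  ultimately show ?thesis by auto
qed

text \<open>Halmos--Vaughan induction: a nonempty proper subset T with exactly card T neighbours
  splits the problem into T and L - T; if there is none, any x can be matched to any of its
  neighbours and Hall's condition survives on the rest.\<close>

theorem Hall_marriage:
  fixes L :: "'a set" and N :: "'a \<Rightarrow> 'b set"
  assumes "finite L" "\<forall>x\<in>L. finite (N x)" "\<forall>S\<subseteq>L. card S \<le> card (\<Union>(N ` S))"
  shows "\<exists>f. inj_on f L \<and> (\<forall>x\<in>L. f x \<in> N x)"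
  using assms
proof (induction "card L" arbitrary: L N rule: less_induct)
  case less
  note fin = less.prems(1,2) and hall = less.prems(3)
  consider (empty) "L = {}"
    | (critical) T where "T \<subseteq> L" "T \<noteq> {}" "T \<noteq> L" "card T = card (\<Union>(N ` T))"
    | (surplus) x where "x \<in> L" "\<forall>S\<subseteq>L. S \<noteq> {} \<longrightarrow> S \<noteq> L \<longrightarrow> card S < card (\<Union>(N ` S))"
  proof (cases "L = {}")
    case False
    then obtain x where "x \<in> L" by blast
    show ?thesis
    proof (cases "\<exists>T. T \<subseteq> L \<and> T \<noteq> {} \<and> T \<noteq> L \<and> card T = card (\<Union>(N ` T))")
      case False
      then have "\<forall>S\<subseteq>L. S \<noteq> {} \<longrightarrow> S \<noteq> L \<longrightarrow> card S < card (\<Union>(N ` S))"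
        using hall le_neq_implies_less by blast
      then show ?thesis using that(3) \<open>x \<in> L\<close> by blast
    qed (use that(2) in blast)
  qed (use that(1) in blast)
  then show ?case
  proof cases
    case empty
    then show ?thesis by simp
  next
    case critical
    have "finite T" using critical(1) fin(1) finite_subset by blast
    have "card T < card L" using critical(1,3) fin(1) by (simp add: psubset_card_mono psubset_eq)
    have "0 < card T" using critical(2) \<open>finite T\<close> by (simp add: card_gt_0_iff)
    then have "card (L - T) < card L"
      using critical(1) \<open>finite T\<close> \<open>card T < card L\<close> by (simp add: card_Diff_subset)
    have "\<exists>f. inj_on f T \<and> (\<forall>x\<in>T. f x \<in> N x)"
      using critical(1) fin hall \<open>finite T\<close> by (intro less.hyps[OF \<open>card T < card L\<close>]) auto
    moreover have "\<exists>g. inj_on g (L - T) \<and> (\<forall>x\<in>L - T. g x \<in> N x - \<Union>(N ` T))"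
      using fin hall_condition_Diff_critical[OF hall fin critical(1,4)]
      by (intro less.hyps[OF \<open>card (L - T) < card L\<close>]) auto
    ultimately show ?thesis using representatives_Un[OF critical(1)] by blast
  next
    case surplus
    have "N x \<noteq> {}" using hall[rule_format, of "{x}"] surplus(1) by auto
    then obtain y where "y \<in> N x" by blast
    have "card (L - {x}) < card L" using fin(1) surplus(1) by (rule card_Diff1_less)
    have "\<exists>g. inj_on g (L - {x}) \<and> (\<forall>z\<in>L - {x}. g z \<in> N z - {y})"
      using fin hall_condition_Diff_singleton[OF surplus(2) fin surplus(1)]
      by (intro less.hyps[OF \<open>card (L - {x}) < card L\<close>]) auto
    then show ?thesis using representatives_insert[of x L y N] surplus(1) \<open>y \<in> N x\<close> by blast
  qed
qed

lemma deg_Un_disjoint: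
  assumes "finite F" "finite G" "F \<inter> G = {}"
  shows "deg (F \<union> G) ends v = deg F ends v + deg G ends v"
proof -
  have "{e\<in>F \<union> G. v \<in> ends e} = {e\<in>F. v \<in> ends e} \<union> {e\<in>G. v \<in> ends e}" by blast
  then show ?thesis unfolding deg_def using assms by (simp add: card_Un_disjoint disjoint_iff)
qed

lemma deg_singleton: "deg {e} ends v = (if v \<in> ends e then 1 else 0)"
proof -
  have "{e'\<in>{e}. v \<in> ends e'} = (if v \<in> ends e then {e} else {})" by auto
  then show ?thesis unfolding deg_def by (simp only:) simp
qed

lemma balance_deficiency_cases:
  "(3::nat) * (t + 1) + l = 3 * n + k \<Longrightarrow> n + k \<le> t + 2 \<Longrightarrow>
    (k = 0 \<and> l = 0) \<or> (k = 0 \<and> n = t + 2) \<or> (k = 1 \<and> l = 1)"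
  by presburger

text \<open>The end of e in S; only meaningful when exactly one end of e lies in S.\<close>

definition end_in :: "('e \<Rightarrow> 'v set) \<Rightarrow> 'v set \<Rightarrow> 'e \<Rightarrow> 'v" where
  "end_in ends S e = (THE x. x \<in> ends e \<inter> S)"

locale cubic_bipartite =
  fixes V :: "'v set" and E :: "'e set" and ends :: "'e \<Rightarrow> 'v set" and A B :: "'v set"
  assumes multigraph: "multigraph V E ends" and connected: "connected_graph V E ends"
    and cubic: "cubic V E ends" and bipartite: "bipartite_on V E ends A B"
begin

abbreviation "endA \<equiv> end_in ends A"
abbreviation "endB \<equiv> end_in ends B"

abbreviation "B_nbrs T \<equiv> endB ` {e\<in>E. endA e \<in> T}"
abbreviation "A_nbrs S \<equiv> endA ` {e\<in>E. endB e \<in> S}"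

abbreviation "out_A F X \<equiv> {e\<in>F. endA e \<in> X \<and> endB e \<notin> X}"
abbreviation "out_B F X \<equiv> {e\<in>F. endB e \<in> X \<and> endA e \<notin> X}"

lemma finite_V: "finite V" and finite_E: "finite E" and A_Un_B: "A \<union> B = V"
  and A_Int_B: "A \<inter> B = {}" and finite_A: "finite A" and finite_B: "finite B"
  using multigraph bipartite by (auto simp: multigraph_def bipartite_on_def intro: finite_subset)

lemma cubic_bipartite_swap: "cubic_bipartite V E ends B A"
  using multigraph connected cubic bipartite unfolding cubic_bipartite_def bipartite_on_def
  by (auto simp: Int_commute Un_commute)

lemma edge_ends:
  assumes "e \<in> E"
  shows "ends e = {endA e, endB e}" "endA e \<in> A" "endB e \<in> B"
proof -
  have "card (ends e \<inter> A) = 1" "card (ends e \<inter> B) = 1" "ends e \<subseteq> V"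
    using assms bipartite multigraph by (auto simp: bipartite_on_def multigraph_def)
  then obtain x y where x: "ends e \<inter> A = {x}" and y: "ends e \<inter> B = {y}"
    by (meson card_1_singletonE)
  then have "endA e = x" "endB e = y" by (auto simp: end_in_def)
  moreover have "ends e = (ends e \<inter> A) \<union> (ends e \<inter> B)" using \<open>ends e \<subseteq> V\<close> A_Un_B by blast
  ultimately show "ends e = {endA e, endB e}" "endA e \<in> A" "endB e \<in> B" using x y by auto
qed

lemma mem_ends_iff: "e \<in> E \<Longrightarrow> v \<in> ends e \<longleftrightarrow> v = endA e \<or> v = endB e"
  using edge_ends by auto

lemma mem_ends_A_iff: "e \<in> E \<Longrightarrow> v \<in> A \<Longrightarrow> v \<in> ends e \<longleftrightarrow> endA e = v"
  using edge_ends[of e] A_Int_B by auto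

lemma mem_ends_B_iff: "e \<in> E \<Longrightarrow> v \<in> B \<Longrightarrow> v \<in> ends e \<longleftrightarrow> endB e = v"
  using edge_ends[of e] A_Int_B by auto

lemma ends_eq_doubleton_iff:
  "e \<in> E \<Longrightarrow> a \<in> A \<Longrightarrow> b \<in> B \<Longrightarrow> ends e = {a, b} \<longleftrightarrow> endA e = a \<and> endB e = b"
  using edge_ends[of e] A_Int_B by (auto simp: doubleton_eq_iff)

lemma finite_edge_set: "F \<subseteq> E \<Longrightarrow> finite {e\<in>F. P e}"
  using finite_E by (auto intro: finite_subset)

lemma sum_deg_A:
  assumes "F \<subseteq> E" "S \<subseteq> A"
  shows "(\<Sum>v\<in>S. deg F ends v) = card {e\<in>F. endA e \<in> S}"
proof -
  have "finite S" using assms(2) finite_A finite_subset by blast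
  have "(\<Sum>v\<in>S. deg F ends v) = (\<Sum>v\<in>S. card {e\<in>F. endA e = v})"
    using assms mem_ends_A_iff by (intro sum.cong) (auto simp: deg_def intro!: arg_cong[where f = card])
  also have "\<dots> = card (\<Union>v\<in>S. {e\<in>F. endA e = v})"
    using \<open>finite S\<close> finite_edge_set[OF assms(1)] by (intro card_UN_disjoint[symmetric]) auto
  also have "(\<Union>v\<in>S. {e\<in>F. endA e = v}) = {e\<in>F. endA e \<in> S}" by auto
  finally show ?thesis .
qed

lemma sum_deg_balance:
  assumes "F \<subseteq> E"
  shows "(\<Sum>v\<in>X \<inter> A. deg F ends v) + card (out_B F X)
       = (\<Sum>v\<in>X \<inter> B. deg F ends v) + card (out_A F X)"
proof -
  let ?inside = "{e\<in>F. endA e \<in> X \<and> endB e \<in> X}"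
  have split: "card {e\<in>F. P e} = card {e\<in>F. P e \<and> Q e} + card {e\<in>F. P e \<and> \<not> Q e}" for P Q
    using finite_edge_set[OF assms] by (subst card_Un_disjoint[symmetric]) (auto intro: arg_cong[where f = card])
  have "{e\<in>F. endA e \<in> X \<inter> A} = {e\<in>F. endA e \<in> X}" "{e\<in>F. endB e \<in> X \<inter> B} = {e\<in>F. endB e \<in> X}"
    using edge_ends assms by blast+
  then have "(\<Sum>v\<in>X \<inter> A. deg F ends v) = card {e\<in>F. endA e \<in> X}"
    and "(\<Sum>v\<in>X \<inter> B. deg F ends v) = card {e\<in>F. endB e \<in> X}"
    using sum_deg_A[OF assms, of "X \<inter> A"] cubic_bipartite.sum_deg_A[OF cubic_bipartite_swap assms, of "X \<inter> B"]
    by simp_all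
  moreover have "card {e\<in>F. endB e \<in> X} = card ?inside + card (out_B F X)"
    using split[of "\<lambda>e. endB e \<in> X" "\<lambda>e. endA e \<in> X"] by (simp add: conj_commute)
  ultimately show ?thesis using split[of "\<lambda>e. endA e \<in> X" "\<lambda>e. endB e \<in> X"] by simp
qed

lemma regular_balance:
  assumes "F \<subseteq> E" "\<forall>v\<in>V. deg F ends v = k" "X \<subseteq> V"
  shows "k * card (X \<inter> A) + card (out_B F X) = k * card (X \<inter> B) + card (out_A F X)"
  using sum_deg_balance[OF assms(1), of X] assms(2,3) by (simp add: subset_iff mult.commute)

lemma deg_E: "v \<in> V \<Longrightarrow> deg E ends v = 3"
  using cubic by (simp add: cubic_def)

lemma cubic_balance:
  "X \<subseteq> V \<Longrightarrow> 3 * card (X \<inter> A) + card (out_B E X) = 3 * card (X \<inter> B) + card (out_A E X)"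
  using regular_balance[of E 3 X] deg_E by simp

lemma card_A_eq_card_B: "card A = card B"
proof -
  have "out_A E V = {}" "out_B E V = {}" "V \<inter> A = A" "V \<inter> B = B" using edge_ends A_Un_B by auto
  then have "3 * card A = 3 * card B" using cubic_balance[OF order_refl] by (simp only: card.empty add_0_right)
  then show ?thesis by simp
qed

lemma card_Diff_Int_A: "card ((V - X) \<inter> A) = card A - card (X \<inter> A)"
proof -
  have "(V - X) \<inter> A = A - X \<inter> A" using A_Un_B by blast
  then show ?thesis using finite_A by (simp add: card_Diff_subset)
qed

lemma mem_cut_iff: "e \<in> E \<Longrightarrow> e \<in> cut E ends X \<longleftrightarrow> (endA e \<in> X \<longleftrightarrow> endB e \<notin> X)"
  using edge_ends[of e] A_Int_B unfolding cut_def
  by (cases "endA e \<in> X"; cases "endB e \<in> X") (auto simp: Int_insert_left card_insert_if)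

lemma cut_Int_eq: "M \<subseteq> E \<Longrightarrow> cut E ends X \<inter> M = out_A M X \<union> out_B M X"
  using mem_cut_iff by blast

lemma card_cut_Int:
  "M \<subseteq> E \<Longrightarrow> card (cut E ends X \<inter> M) = card (out_A M X) + card (out_B M X)"
  unfolding cut_Int_eq by (rule card_Un_disjoint) (auto intro: finite_edge_set)

lemma card_cut: "card (cut E ends X) = card (out_A E X) + card (out_B E X)"
  using card_cut_Int[of E X] by (simp add: cut_def Int_absorb2)

lemma cut_Diff: "cut E ends (V - X) = cut E ends X"
proof -
  have "endA e \<in> V" "endB e \<in> V" if "e \<in> E" for e using edge_ends[OF that] A_Un_B by auto
  then show ?thesis using mem_cut_iff by (auto simp: cut_def[of E ends])
qed

lemma cut_nonempty:
  assumes "u \<in> X" "u \<in> V" "v \<in> V" "v \<notin> X"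
  shows "cut E ends X \<noteq> {}"
proof
  assume empty: "cut E ends X = {}"
  have "(u, v) \<in> (adj_rel V E ends)\<^sup>*" using connected assms by (auto simp: connected_graph_def)
  then have "v \<in> X"
  proof (induction rule: rtrancl_induct)
    case (step y z)
    then obtain e where e: "e \<in> E" "ends e = {y, z}" by (auto simp: adj_rel_def)
    have "card {y, z} = 2" using e multigraph by (auto simp: multigraph_def)
    moreover have "card ({y, z} \<inter> X) \<noteq> 1" using e empty by (auto simp: cut_def)
    ultimately show ?case using step.IH by (cases "z \<in> X") auto
  qed (use assms in simp)
  then show False using assms by simp
qed

lemma perfect_matching_between:
  assumes "L \<subseteq> A" "R \<subseteq> B" "card L = card R" "\<forall>T\<subseteq>L. card T \<le> card (B_nbrs T \<inter> R)"
  obtains M where "M \<subseteq> E" "\<forall>e\<in>M. endA e \<in> L \<and> endB e \<in> R" "\<forall>v\<in>L \<union> R. deg M ends v = 1"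
proof -
  define N where "N z = B_nbrs {z} \<inter> R" for z
  have "finite L" "finite R" using assms(1,2) finite_A finite_B finite_subset by blast+
  moreover have "\<Union>(N ` T) = B_nbrs T \<inter> R" for T by (auto simp: N_def)
  ultimately obtain f where f: "inj_on f L" "\<forall>z\<in>L. f z \<in> N z"
    using Hall_marriage[of L N] assms(4) by (auto simp: N_def)
  have "f ` L \<subseteq> R" using f(2) by (auto simp: N_def)
  moreover have "card (f ` L) = card R" using f(1) assms(3) by (simp add: card_image)
  ultimately have fLR: "f ` L = R" using \<open>finite R\<close> by (simp add: card_subset_eq)
  have "\<forall>z\<in>L. \<exists>e. e \<in> E \<and> endA e = z \<and> endB e = f z" using f(2) by (force simp: N_def)
  then obtain g where g: "\<And>z. z \<in> L \<Longrightarrow> g z \<in> E \<and> endA (g z) = z \<and> endB (g z) = f z" by metis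
  have "deg (g ` L) ends v = 1" if "v \<in> L \<union> R" for v
  proof -
    obtain z where z: "z \<in> L" "v = z \<or> v = f z" using \<open>v \<in> L \<union> R\<close> fLR by blast
    have "{e\<in>g ` L. v \<in> ends e} = {g z}"
    proof (intro equalityI subsetI)
      fix e assume "e \<in> {e\<in>g ` L. v \<in> ends e}"
      then obtain z' where "z' \<in> L" "e = g z'" "v \<in> ends (g z')" by blast
      then have "z' = z" using g[of z'] g[of z] z mem_ends_iff[of "g z'" v] assms(1,2) A_Int_B f(1) fLR
        by (auto simp: inj_on_def)
      then show "e \<in> {g z}" using \<open>e = g z'\<close> by simp
    qed (use g[of z] z mem_ends_iff in auto)
    then show ?thesis by (simp add: deg_def)
  qed
  moreover have "g ` L \<subseteq> E" "\<forall>e\<in>g ` L. endA e \<in> L \<and> endB e \<in> R" using g fLR by auto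
  ultimately show ?thesis using that by blast
qed

lemma card_edges_from_A: "T \<subseteq> A \<Longrightarrow> card {e\<in>E. endA e \<in> T} = 3 * card T"
  using sum_deg_A[of E T] deg_E A_Un_B by (auto simp: subset_iff)

text \<open>Regularity gives card (B_nbrs T) \<ge> card T; equality together with endB e \<in> B_nbrs T would
  force every edge at B_nbrs T, in particular e, to start in T.\<close>

lemma hall_condition_avoiding_edge:
  assumes "e \<in> E" and T: "T \<subseteq> A - {endA e}"
  shows "card T \<le> card (B_nbrs T \<inter> (B - {endB e}))"
proof (rule ccontr)
  assume lt: "\<not> ?thesis"
  let ?from = "{e\<in>E. endA e \<in> T}" and ?to = "{e\<in>E. endB e \<in> B_nbrs T}"
  have "B_nbrs T \<subseteq> B" using edge_ends by auto
  then have "B_nbrs T \<inter> (B - {endB e}) = B_nbrs T - {endB e}" by blast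
  have "card ?from = 3 * card T" using T by (intro card_edges_from_A) auto
  have "card ?to = 3 * card (B_nbrs T)"
    using \<open>B_nbrs T \<subseteq> B\<close> by (rule cubic_bipartite.card_edges_from_A[OF cubic_bipartite_swap])
  have "card ?from \<le> card ?to" by (rule card_mono[OF finite_edge_set[OF order_refl]]) blast
  then have "card T \<le> card (B_nbrs T)"
    using \<open>card ?from = 3 * card T\<close> \<open>card ?to = 3 * card (B_nbrs T)\<close> by simp
  with lt have "endB e \<in> B_nbrs T" "card (B_nbrs T) = card T"
    using \<open>B_nbrs T \<inter> (B - {endB e}) = B_nbrs T - {endB e}\<close> finite_B \<open>B_nbrs T \<subseteq> B\<close>
    by (auto simp: card_Diff_singleton_if finite_subset split: if_splits)
  then have "?from = ?to"
    using \<open>card ?from = 3 * card T\<close> \<open>card ?to = 3 * card (B_nbrs T)\<close>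
    by (intro card_subset_eq[OF finite_edge_set[OF order_refl]]) auto
  then have "endA e \<in> T" using assms(1) \<open>endB e \<in> B_nbrs T\<close> by blast
  then show False using T by blast
qed

lemma edge_in_perfect_matching:
  assumes "e \<in> E"
  obtains M where "perfect_matching V E ends M" "e \<in> M"
proof -
  let ?x = "endA e" and ?y = "endB e"
  have xy: "?x \<in> A" "?y \<in> B" using edge_ends assms by auto
  then have "card (A - {?x}) = card (B - {?y})" using card_A_eq_card_B by simp
  with hall_condition_avoiding_edge[OF assms]
  obtain M0 where M0: "M0 \<subseteq> E" "\<forall>e\<in>M0. endA e \<in> A - {?x} \<and> endB e \<in> B - {?y}"
      "\<forall>v\<in>(A - {?x}) \<union> (B - {?y}). deg M0 ends v = 1"
    using perfect_matching_between[of "A - {?x}" "B - {?y}"] by blast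
  have "e \<notin> M0" "finite M0" using M0(2) finite_edge_set[OF M0(1), of "\<lambda>_. True"] by auto
  then have deg: "deg (M0 \<union> {e}) ends v = deg M0 ends v + deg {e} ends v" for v
    by (intro deg_Un_disjoint) auto
  have "deg (M0 \<union> {e}) ends v = 1" if "v \<in> V" for v
  proof (cases "v = ?x \<or> v = ?y")
    case True
    have "v \<notin> ends e'" if "e' \<in> M0" for e'
      using that True M0(2) xy A_Int_B edge_ends[OF subsetD[OF M0(1) that]] by auto
    then have "{e'\<in>M0. v \<in> ends e'} = {}" by blast
    then have "deg M0 ends v = 0" unfolding deg_def by (metis card.empty)
    then show ?thesis using deg True edge_ends[OF assms] by (auto simp: deg_singleton)
  next
    case False
    then show ?thesis using deg M0(3) \<open>v \<in> V\<close> A_Un_B edge_ends[OF assms] by (auto simp: deg_singleton)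
  qed
  then have "perfect_matching V E ends (M0 \<union> {e})" using M0(1) assms by (simp add: perfect_matching_def)
  then show ?thesis using that by blast
qed

lemma sum_deg_ab_matching:
  assumes "ab_matching V E ends a b F" "a \<noteq> b" "S \<subseteq> V"
  shows "(\<Sum>v\<in>S. deg F ends v) = card S + 2 * card (S \<inter> {a, b})"
proof -
  have "finite S" using assms(3) finite_V finite_subset by blast
  have "(\<Sum>v\<in>S. deg F ends v) = (\<Sum>v\<in>S \<inter> {a, b}. deg F ends v) + (\<Sum>v\<in>S - {a, b}. deg F ends v)"
    using \<open>finite S\<close> by (rule sum.Int_Diff)
  also have "(\<Sum>v\<in>S \<inter> {a, b}. deg F ends v) = (\<Sum>v\<in>S \<inter> {a, b}. 3)"
    using assms(1) by (intro sum.cong) (auto simp: ab_matching_def)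
  also have "(\<Sum>v\<in>S - {a, b}. deg F ends v) = (\<Sum>v\<in>S - {a, b}. 1)"
    using assms(1,3) by (intro sum.cong) (auto simp: ab_matching_def)
  finally have "(\<Sum>v\<in>S. deg F ends v) = 3 * card (S \<inter> {a, b}) + card (S - {a, b})" by simp
  moreover have "card S = card (S \<inter> {a, b}) + card (S - {a, b})"
    using \<open>finite S\<close> by (rule card_Int_Diff)
  ultimately show ?thesis by simp
qed

lemma ab_matching_balance:
  assumes "ab_matching V E ends a b F" "a \<in> A" "b \<in> B" "X \<subseteq> V" "a \<in> X" "b \<notin> X"
  shows "card (X \<inter> A) + 2 + card (out_B F X) = card (X \<inter> B) + card (out_A F X)"
proof -
  have "a \<noteq> b" "X \<inter> A \<inter> {a, b} = {a}" "X \<inter> B \<inter> {a, b} = {}" using assms(2-6) A_Int_B by auto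
  moreover have "X \<inter> A \<subseteq> V" "X \<inter> B \<subseteq> V" using assms(4) by auto
  moreover have "F \<subseteq> E" using assms(1) by (simp add: ab_matching_def)
  ultimately show ?thesis
    using sum_deg_balance[of F X] sum_deg_ab_matching[OF assms(1) \<open>a \<noteq> b\<close>] by simp
qed

lemma not_ab_matching_if_two_cut:
  assumes "a \<in> A" "b \<in> B" "e \<in> E" "ends e = {a, b}" "two_cut V E ends C" "e \<in> C"
  shows "\<not> ab_matching V E ends a b F"
proof
  assume F: "ab_matching V E ends a b F"
  obtain X where X: "X \<subseteq> V" "C = cut E ends X" "card C = 2" using assms(5) by (auto simp: two_cut_def)
  obtain Y where Y: "Y \<subseteq> V" "C = cut E ends Y" "a \<in> Y"
  proof (cases "a \<in> X")
    case False
    then show ?thesis using that[of "V - X"] X cut_Diff assms(1) A_Un_B by blast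
  qed (use that X in blast)
  have e: "endA e = a" "endB e = b" using ends_eq_doubleton_iff assms(1-4) by auto
  then have "b \<notin> Y" using assms(3,6) Y mem_cut_iff by blast
  have "e \<in> out_A E Y" using e Y(3) \<open>b \<notin> Y\<close> assms(3) by simp
  then have "card (out_A E Y) > 0" using finite_edge_set[OF order_refl] by (auto simp: card_gt_0_iff)
  moreover have "card (out_A E Y) + card (out_B E Y) = 2"
    using card_cut[of Y] X(3) Y(2) by simp
  moreover note cubic_balance[OF Y(1)]
  ultimately have "card (out_A E Y) = 1" "card (Y \<inter> A) = card (Y \<inter> B)" by presburger+
  then have "out_A E Y = {e}" using \<open>e \<in> out_A E Y\<close> by (metis card_1_singletonE singletonD)
  moreover have "out_A F Y \<subseteq> out_A E Y" using F by (auto simp: ab_matching_def)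
  ultimately have "card (out_A F Y) \<le> 1" using card_mono[of "{e}" "out_A F Y"] by simp
  then show False
    using ab_matching_balance[OF F assms(1,2) Y(1,3) \<open>b \<notin> Y\<close>] \<open>card (Y \<inter> A) = card (Y \<inter> B)\<close> by linarith
qed

text \<open>The side X of a tight cut whose minus side is X \<inter> A, described without perfect matchings.\<close>

definition tight_shore :: "'v set \<Rightarrow> bool" where
  "tight_shore X \<longleftrightarrow> X \<subseteq> V \<and> card (X \<inter> B) = card (X \<inter> A) + 1 \<and> out_A E X = {}"

lemma not_ab_matching_if_tight_shore:
  assumes "tight_shore X" "a \<in> A" "b \<in> B" "a \<in> X" "b \<notin> X"
  shows "\<not> ab_matching V E ends a b F"
proof
  assume F: "ab_matching V E ends a b F"
  then have "out_A F X = {}" using assms(1) by (auto simp: ab_matching_def tight_shore_def)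
  then have "card (out_A F X) = 0" by (simp only: card.empty)
  moreover have X: "X \<subseteq> V" "card (X \<inter> B) = card (X \<inter> A) + 1"
    using assms(1) by (simp_all add: tight_shore_def)
  ultimately show False using ab_matching_balance[OF F assms(2,3) X(1) assms(4,5)] by linarith
qed

lemma tight_cut_if_tight_shore:
  assumes "tight_shore X"
  shows "tight_cut V E ends (cut E ends X)"
  unfolding tight_cut_def
proof (intro conjI allI impI)
  show "\<exists>Y\<subseteq>V. cut E ends X = cut E ends Y" using assms by (auto simp: tight_shore_def)
next
  fix M assume M: "perfect_matching V E ends M"
  then have "M \<subseteq> E" "\<forall>v\<in>V. deg M ends v = 1" by (auto simp: perfect_matching_def)
  moreover have "out_A M X = {}" using assms \<open>M \<subseteq> E\<close> by (auto simp: tight_shore_def)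
  then have "card (out_A M X) = 0" by (simp only: card.empty)
  ultimately show "card (cut E ends X \<inter> M) = 1"
    using regular_balance[of M 1 X] card_cut_Int[of M X] assms by (simp add: tight_shore_def)
qed

lemma tight_shore_if_tight_cut:
  assumes X: "X \<subseteq> V" and tight: "tight_cut V E ends (cut E ends X)"
    and less: "card (X \<inter> A) < card (X \<inter> B)"
  shows "tight_shore X"
proof -
  have key: "card (out_A M X) = 0 \<and> card (X \<inter> B) = card (X \<inter> A) + 1"
    if M: "perfect_matching V E ends M" for M
  proof -
    have "M \<subseteq> E" "\<forall>v\<in>V. deg M ends v = 1" using M by (auto simp: perfect_matching_def)
    then have "card (X \<inter> A) + card (out_B M X) = card (X \<inter> B) + card (out_A M X)"
      using regular_balance[of M 1 X] X by simp
    moreover have "card (out_A M X) + card (out_B M X) = 1"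
      using tight M card_cut_Int[OF \<open>M \<subseteq> E\<close>, of X] by (simp add: tight_cut_def)
    ultimately show ?thesis using less by linarith
  qed
  obtain v where "v \<in> X \<inter> B" using less by (metis card.empty ex_in_conv less_nat_zero_code)
  then have "deg E ends v = 3" using X deg_E by auto
  then have "{e\<in>E. v \<in> ends e} \<noteq> {}" unfolding deg_def by (intro notI) simp
  then obtain e where "e \<in> E" by blast
  then obtain M where "perfect_matching V E ends M" by (rule edge_in_perfect_matching)
  have "out_A E X = {}"
  proof (rule ccontr)
    assume "out_A E X \<noteq> {}"
    then obtain e where e: "e \<in> out_A E X" by blast
    then obtain M where M: "perfect_matching V E ends M" "e \<in> M" using edge_in_perfect_matching by blast
    then have "M \<subseteq> E" by (simp add: perfect_matching_def)
    then have "card (out_A M X) \<noteq> 0" using M(2) e finite_edge_set[of M] by auto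
    then show False using key[OF M(1)] by simp
  qed
  then show ?thesis using key[OF \<open>perfect_matching V E ends M\<close>] X by (simp add: tight_shore_def)
qed

lemma odd_card_tight_shore:
  assumes "tight_shore X"
  shows "odd (card X)"
proof -
  have "finite X" "X = (X \<inter> A) \<union> (X \<inter> B)"
    using assms finite_V A_Un_B finite_subset by (auto simp: tight_shore_def)
  then have "card X = card (X \<inter> A) + card (X \<inter> B)"
    using A_Int_B by (metis card_Un_disjoint finite_Int inf_commute inf_left_commute inf_bot_right)
  then show ?thesis using assms by (simp add: tight_shore_def)
qed

lemma minus_sides_tight_shore:
  assumes "tight_shore X"
  shows "minus_side A B X = X \<inter> A" "minus_side A B (V - X) = (V - X) \<inter> B"
proof -
  have "card (X \<inter> B) \<le> card B" using finite_B by (simp add: card_mono)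
  then have "\<not> card ((V - X) \<inter> A) < card ((V - X) \<inter> B)"
    using assms card_Diff_Int_A cubic_bipartite.card_Diff_Int_A[OF cubic_bipartite_swap]
      card_A_eq_card_B by (simp add: tight_shore_def)
  then show "minus_side A B (V - X) = (V - X) \<inter> B" by (simp add: minus_side_def)
  show "minus_side A B X = X \<inter> A" using assms by (simp add: minus_side_def tight_shore_def)
qed

lemma tight_shore_complement:
  assumes "cubic_bipartite.tight_shore V E ends B A X"
  shows "tight_shore (V - X)"
proof -
  have X: "X \<subseteq> V" "card (X \<inter> A) = card (X \<inter> B) + 1" "out_B E X = {}"
    using assms cubic_bipartite.tight_shore_def[OF cubic_bipartite_swap] by simp_all
  have "card (X \<inter> A) \<le> card A" using finite_A by (simp add: card_mono)
  then have "card ((V - X) \<inter> B) = card ((V - X) \<inter> A) + 1"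
    using X(2) card_Diff_Int_A cubic_bipartite.card_Diff_Int_A[OF cubic_bipartite_swap]
      card_A_eq_card_B by simp
  moreover have "out_A E (V - X) = {}" using X(3) edge_ends A_Un_B by blast
  ultimately show ?thesis by (simp add: tight_shore_def)
qed

lemma ex_tight_cut_minus_sides_iff:
  assumes "a \<in> A" "b \<in> B"
  shows "(\<exists>X\<subseteq>V. odd (card X) \<and> tight_cut V E ends (cut E ends X) \<and>
            a \<in> minus_side A B X \<and> b \<in> minus_side A B (V - X))
    \<longleftrightarrow> (\<exists>X. tight_shore X \<and> a \<in> X \<and> b \<notin> X)"
proof
  assume "\<exists>X\<subseteq>V. odd (card X) \<and> tight_cut V E ends (cut E ends X) \<and>
            a \<in> minus_side A B X \<and> b \<in> minus_side A B (V - X)"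
  then obtain X where X: "X \<subseteq> V" "tight_cut V E ends (cut E ends X)"
    "a \<in> minus_side A B X" "b \<in> minus_side A B (V - X)" by blast
  then have "a \<in> X" "card (X \<inter> A) < card (X \<inter> B)" "b \<notin> X"
    using assms A_Int_B by (auto simp: minus_side_def split: if_splits)
  then show "\<exists>X. tight_shore X \<and> a \<in> X \<and> b \<notin> X" using tight_shore_if_tight_cut X(1,2) by blast
next
  assume "\<exists>X. tight_shore X \<and> a \<in> X \<and> b \<notin> X"
  then obtain X where "tight_shore X" "a \<in> X" "b \<notin> X" by blast
  moreover have "b \<in> V" using assms A_Un_B by blast
  ultimately show "\<exists>X\<subseteq>V. odd (card X) \<and> tight_cut V E ends (cut E ends X) \<and>
            a \<in> minus_side A B X \<and> b \<in> minus_side A B (V - X)"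
    using assms odd_card_tight_shore tight_cut_if_tight_shore minus_sides_tight_shore
    by (auto simp: tight_shore_def)
qed

text \<open>Obstructions (i) and (ii) of the theorem, with the tight cut of (ii) given by a shore.\<close>

definition obstructed :: "'v \<Rightarrow> 'v \<Rightarrow> bool" where
  "obstructed a b \<longleftrightarrow>
     (\<exists>e. {e\<in>E. ends e = {a, b}} = {e} \<and> (\<exists>C. two_cut V E ends C \<and> e \<in> C)) \<or>
     ({e\<in>E. ends e = {a, b}} = {} \<and> (\<exists>X. tight_shore X \<and> a \<in> X \<and> b \<notin> X))"

lemma obstructed_swap:
  assumes "a \<in> A" "cubic_bipartite.obstructed V E ends B A b a"
  shows "obstructed a b"
proof -
  have "{b, a} = {a, b}" by blast
  from assms(2) consider
      (two_cut) e where "{e\<in>E. ends e = {a, b}} = {e}" "\<exists>C. two_cut V E ends C \<and> e \<in> C"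
    | (shore) X where "{e\<in>E. ends e = {a, b}} = {}" "cubic_bipartite.tight_shore V E ends B A X"
        "b \<in> X" "a \<notin> X"
    unfolding cubic_bipartite.obstructed_def[OF cubic_bipartite_swap] \<open>{b, a} = {a, b}\<close> by blast
  then show ?thesis
  proof cases
    case shore
    moreover have "a \<in> V" using assms(1) A_Un_B by blast
    ultimately show ?thesis using tight_shore_complement unfolding obstructed_def by blast
  qed (auto simp: obstructed_def)
qed

lemma parallel_edges_eq:
  "a \<in> A \<Longrightarrow> b \<in> B \<Longrightarrow> {e\<in>E. ends e = {a, b}} = {e\<in>E. endA e = a \<and> endB e = b}"
  using ends_eq_doubleton_iff by blast

lemma card_nbrs_plus_parallel:
  assumes "a \<in> A"
  shows "card (B_nbrs {a} - {b}) + card {e\<in>E. endA e = a \<and> endB e = b} \<le> 3"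
    and "card (B_nbrs {a} - {b}) + card {e\<in>E. endA e = a \<and> endB e = b} = 3 \<Longrightarrow>
         y \<in> B_nbrs {a} - {b} \<Longrightarrow> card {e\<in>E. endA e = a \<and> endB e = y} = 1"
proof -
  let ?other = "{e\<in>E. endA e = a \<and> endB e \<noteq> b}" and ?parallel = "{e\<in>E. endA e = a \<and> endB e = b}"
  have "card {e\<in>E. endA e = a} = 3" using card_edges_from_A[of "{a}"] assms by simp
  moreover have "{e\<in>E. endA e = a} = ?parallel \<union> ?other" by auto
  ultimately have three: "card ?other + card ?parallel = 3"
    using finite_edge_set[OF order_refl] by (simp add: card_Un_disjoint disjoint_iff)
  have image: "B_nbrs {a} - {b} = endB ` ?other" by auto
  have "card (endB ` ?other) \<le> card ?other" by (rule card_image_le[OF finite_edge_set[OF order_refl]])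
  then show "card (B_nbrs {a} - {b}) + card ?parallel \<le> 3" using three image by simp
  assume "card (B_nbrs {a} - {b}) + card ?parallel = 3" and y: "y \<in> B_nbrs {a} - {b}"
  then have "inj_on endB ?other"
    using three image finite_edge_set[OF order_refl] by (simp add: inj_on_iff_eq_card)
  moreover obtain e where "e \<in> ?other" "endB e = y" using y image by auto
  ultimately have "{e\<in>E. endA e = a \<and> endB e = y} = {e}" using y by (auto simp: inj_on_def)
  then show "card {e\<in>E. endA e = a \<and> endB e = y} = 1" by simp
qed

lemma obstructed_if_deficient:
  assumes a: "a \<in> A" and b: "b \<in> B" and T: "T \<subseteq> A - {a}" "\<forall>e\<in>E. endA e \<in> T \<longrightarrow> endB e \<noteq> b"
    and deficient: "card (B_nbrs (insert a T) - {b}) + card {e\<in>E. endA e = a \<and> endB e = b} \<le> card T + 2"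
  shows "obstructed a b"
proof -
  let ?N = "B_nbrs (insert a T) - {b}" and ?P = "{e\<in>E. endA e = a \<and> endB e = b}"
  define X where "X = insert a T \<union> ?N"
  have "?N \<subseteq> B" using edge_ends by auto
  then have XA: "X \<inter> A = insert a T" and XB: "X \<inter> B = ?N"
    using A_Int_B T(1) a by (auto simp: X_def)
  have X: "X \<subseteq> V" "a \<in> X" "b \<notin> X" using \<open>?N \<subseteq> B\<close> T(1) a b A_Un_B A_Int_B by (auto simp: X_def)
  have out: "out_A E X = ?P"
  proof (intro equalityI subsetI)
    fix e assume e: "e \<in> out_A E X"
    then have "endA e \<in> insert a T" using XA edge_ends by blast
    moreover have "endB e = b" using e \<open>endA e \<in> insert a T\<close> by (auto simp: X_def)
    ultimately show "e \<in> ?P" using e T(2) by auto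
  qed (use X in auto)
  have "finite T" "a \<notin> T" using T(1) finite_A finite_subset[of T A] by auto
  then have "card (X \<inter> A) = card T + 1" using XA by simp
  then have "3 * (card T + 1) + card (out_B E X) = 3 * card ?N + card ?P"
    using cubic_balance[OF X(1)] XB out by simp
  from balance_deficiency_cases[OF this deficient]
  consider (no_cut) "card ?P = 0" "card (out_B E X) = 0"
    | (shore) "card ?P = 0" "card ?N = card T + 2"
    | (two_cut) "card ?P = 1" "card (out_B E X) = 1"
    by argo
  then show ?thesis
  proof cases
    case no_cut
    then have "card (cut E ends X) = 0" using card_cut[of X] out by simp
    moreover have "finite (cut E ends X)" unfolding cut_def by (rule finite_edge_set) simp
    moreover have "cut E ends X \<noteq> {}" using cut_nonempty X a b A_Un_B by blast
    ultimately show ?thesis by simp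
  next
    case shore
    moreover have "finite ?P" by (rule finite_edge_set) simp
    ultimately have "?P = {}" "tight_shore X"
      using XA XB X(1) out \<open>card (X \<inter> A) = card T + 1\<close> by (simp_all add: tight_shore_def)
    then show ?thesis using X(2,3) parallel_edges_eq[OF a b] unfolding obstructed_def by auto
  next
    case two_cut
    then obtain e where e: "?P = {e}" using card_1_singletonE by blast
    then have "two_cut V E ends (cut E ends X)" "e \<in> cut E ends X"
      using two_cut X(1) card_cut[of X] out mem_cut_iff[of e X] by (auto simp: two_cut_def)
    then show ?thesis using e parallel_edges_eq[OF a b] unfolding obstructed_def by blast
  qed
qed

lemma deg_edges_at_pair_B:
  assumes a: "a \<in> A" and b: "b \<in> B" and v: "v \<in> B - {b}"
    and full: "card (B_nbrs {a} - {b}) + card {e\<in>E. endA e = a \<and> endB e = b} = 3"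
  shows "deg {e\<in>E. a \<in> ends e \<or> b \<in> ends e} ends v = (if v \<in> B_nbrs {a} then 1 else 0)"
proof -
  have "{e\<in>{e\<in>E. a \<in> ends e \<or> b \<in> ends e}. v \<in> ends e} = {e\<in>E. endA e = a \<and> endB e = v}"
    using a b v mem_ends_A_iff mem_ends_B_iff by auto
  moreover have "card {e\<in>E. endA e = a \<and> endB e = v} = (if v \<in> B_nbrs {a} then 1 else 0)"
  proof (cases "v \<in> B_nbrs {a}")
    case True
    then show ?thesis using card_nbrs_plus_parallel(2)[OF a full] v by simp
  next
    case False
    then have "{e\<in>E. endA e = a \<and> endB e = v} = {}" by auto
    then show ?thesis using False by (simp only: card.empty if_False)
  qed
  ultimately show ?thesis unfolding deg_def by (simp only:)
qed

lemma deg_edges_at_pair: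
  assumes a: "a \<in> A" and b: "b \<in> B" and v: "v \<in> V - {a, b}"
    and full_a: "card (B_nbrs {a} - {b}) + card {e\<in>E. endA e = a \<and> endB e = b} = 3"
    and full_b: "card (A_nbrs {b} - {a}) + card {e\<in>E. endB e = b \<and> endA e = a} = 3"
  shows "deg {e\<in>E. a \<in> ends e \<or> b \<in> ends e} ends v = (if v \<in> A_nbrs {b} \<union> B_nbrs {a} then 1 else 0)"
proof (cases "v \<in> B")
  case True
  then have "v \<notin> A_nbrs {b}" using A_Int_B edge_ends by blast
  then show ?thesis using deg_edges_at_pair_B[OF a b _ full_a] True v by simp
next
  case False
  then have "v \<in> A" "v \<notin> B_nbrs {a}" using v A_Un_B edge_ends by blast+
  moreover have "{e\<in>E. a \<in> ends e \<or> b \<in> ends e} = {e\<in>E. b \<in> ends e \<or> a \<in> ends e}" by auto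
  ultimately show ?thesis
    using cubic_bipartite.deg_edges_at_pair_B[OF cubic_bipartite_swap b a _ full_b] v by simp
qed

lemma card_unmatched_sides:
  assumes a: "a \<in> A" and b: "b \<in> B"
    and full_a: "card (B_nbrs {a} - {b}) + card {e\<in>E. endA e = a \<and> endB e = b} = 3"
    and full_b: "card (A_nbrs {b} - {a}) + card {e\<in>E. endB e = b \<and> endA e = a} = 3"
  shows "card (A - insert a (A_nbrs {b})) = card (B - insert b (B_nbrs {a}))"
proof -
  have "A_nbrs {b} \<subseteq> A" "B_nbrs {a} \<subseteq> B" using edge_ends by auto
  then have "card (A - insert a (A_nbrs {b})) = card A - (card (A_nbrs {b} - {a}) + 1)"
    "card (B - insert b (B_nbrs {a})) = card B - (card (B_nbrs {a} - {b}) + 1)"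
    using a b finite_A finite_B finite_subset[of "A_nbrs {b}" A] finite_subset[of "B_nbrs {a}" B]
    by (simp_all add: card_Diff_subset card.insert_remove)
  moreover have "card {e\<in>E. endB e = b \<and> endA e = a} = card {e\<in>E. endA e = a \<and> endB e = b}"
    by (simp add: conj_commute)
  ultimately show ?thesis using full_a full_b card_A_eq_card_B by simp
qed

text \<open>full_a and full_b say that the edges at a, resp. b, not joining a to b lead to distinct
  vertices; together with a perfect matching of the remaining vertices they form an (a,b)-matching.\<close>

lemma lambda_matchable_if_hall:
  assumes a: "a \<in> A" and b: "b \<in> B"
    and full_a: "card (B_nbrs {a} - {b}) + card {e\<in>E. endA e = a \<and> endB e = b} = 3"
    and full_b: "card (A_nbrs {b} - {a}) + card {e\<in>E. endB e = b \<and> endA e = a} = 3"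
    and hall: "\<forall>T\<subseteq>A - insert a (A_nbrs {b}). card T \<le> card (B_nbrs T \<inter> (B - insert b (B_nbrs {a})))"
  shows "lambda_matchable V E ends a b"
proof -
  define L where "L = A - insert a (A_nbrs {b})"
  define R where "R = B - insert b (B_nbrs {a})"
  define D where "D = {e\<in>E. a \<in> ends e \<or> b \<in> ends e}"
  have "L \<subseteq> A" "R \<subseteq> B" by (auto simp: L_def R_def)
  moreover have "card L = card R" unfolding L_def R_def by (rule card_unmatched_sides[OF a b full_a full_b])
  moreover have "\<forall>T\<subseteq>L. card T \<le> card (B_nbrs T \<inter> R)" using hall unfolding L_def R_def .
  ultimately obtain M0 where M0: "M0 \<subseteq> E" "\<forall>e\<in>M0. endA e \<in> L \<and> endB e \<in> R"
      "\<forall>v\<in>L \<union> R. deg M0 ends v = 1"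
    by (rule perfect_matching_between)
  have outside: "v \<notin> ends e" if "e \<in> M0" "v \<notin> L \<union> R" for e v
    using that M0(2) mem_ends_iff[OF subsetD[OF M0(1) that(1)], of v] by blast
  have deg_M0: "deg M0 ends v = (if v \<in> L \<union> R then 1 else 0)" for v
  proof (cases "v \<in> L \<union> R")
    case False
    then have "{e\<in>M0. v \<in> ends e} = {}" using outside by blast
    then show ?thesis using False unfolding deg_def by (metis card.empty)
  qed (use M0(3) in simp)
  have "a \<notin> L \<union> R" "b \<notin> L \<union> R" using a b A_Int_B by (auto simp: L_def R_def)
  then have "M0 \<inter> D = {}" using outside by (auto simp: D_def)
  then have deg_F: "deg (M0 \<union> D) ends v = deg M0 ends v + deg D ends v" for v
    using M0(1) by (intro deg_Un_disjoint) (auto simp: D_def intro: finite_edge_set finite_subset[OF _ finite_E])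
  have "deg D ends v = 3" if "v = a \<or> v = b" for v
  proof -
    have "{e\<in>D. v \<in> ends e} = {e\<in>E. v \<in> ends e}" using that by (auto simp: D_def)
    then show ?thesis using deg_E that a b A_Un_B unfolding deg_def by auto
  qed
  moreover have "v \<in> L \<union> R \<longleftrightarrow> v \<notin> A_nbrs {b} \<union> B_nbrs {a}" if "v \<in> V - {a, b}" for v
    using that A_Un_B A_Int_B edge_ends by (auto simp: L_def R_def)
  ultimately have "ab_matching V E ends a b (M0 \<union> D)"
    using M0(1) deg_F deg_M0 \<open>a \<notin> L \<union> R\<close> \<open>b \<notin> L \<union> R\<close> deg_edges_at_pair[OF a b _ full_a full_b]
    by (auto simp: ab_matching_def D_def)
  then show ?thesis by (auto simp: lambda_matchable_def)
qed

lemma obstructed_if_not_lambda_matchable: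
  assumes a: "a \<in> A" and b: "b \<in> B" and not_matchable: "\<not> lambda_matchable V E ends a b"
  shows "obstructed a b"
proof -
  let ?Na = "B_nbrs {a} - {b}" and ?Nb = "A_nbrs {b} - {a}"
    and ?P = "{e\<in>E. endA e = a \<and> endB e = b}" and ?P' = "{e\<in>E. endB e = b \<and> endA e = a}"
  let ?L = "A - insert a (A_nbrs {b})" and ?R = "B - insert b (B_nbrs {a})"
  have le_a: "card ?Na + card ?P \<le> 3" using card_nbrs_plus_parallel(1)[OF a] .
  have le_b: "card ?Nb + card ?P' \<le> 3"
    using cubic_bipartite.card_nbrs_plus_parallel(1)[OF cubic_bipartite_swap b] .
  show ?thesis
  proof (cases "card ?Na + card ?P = 3")
    case False
    then show ?thesis using obstructed_if_deficient[of a b "{}"] a b le_a by simp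
  next
    case full_a: True
    show ?thesis
    proof (cases "card ?Nb + card ?P' = 3")
      case False
      then have "cubic_bipartite.obstructed V E ends B A b a"
        using cubic_bipartite.obstructed_if_deficient[OF cubic_bipartite_swap b a, of "{}"] le_b by simp
      then show ?thesis using obstructed_swap a by blast
    next
      case full_b: True
      have "\<not> (\<forall>T\<subseteq>?L. card T \<le> card (B_nbrs T \<inter> ?R))"
        using lambda_matchable_if_hall[OF a b full_a full_b] not_matchable by blast
      then obtain T where T: "T \<subseteq> ?L" "card (B_nbrs T \<inter> ?R) < card T" by (auto simp: not_le)
      have "B_nbrs (insert a T) - {b} \<subseteq> (B_nbrs T \<inter> ?R) \<union> ?Na" using edge_ends by auto
      moreover have "finite (B_nbrs S)" for S by (rule finite_imageI[OF finite_edge_set[OF order_refl]])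
      then have "finite ((B_nbrs T \<inter> ?R) \<union> ?Na)" by (meson finite_Diff finite_Int finite_UnI)
      ultimately have "card (B_nbrs (insert a T) - {b}) \<le> card ((B_nbrs T \<inter> ?R) \<union> ?Na)"
        by (rule card_mono[rotated])
      also have "\<dots> \<le> card (B_nbrs T \<inter> ?R) + card ?Na" by (rule card_Un_le)
      finally have "card (B_nbrs (insert a T) - {b}) + card ?P \<le> card T + 2" using T(2) full_a by linarith
      moreover have "T \<subseteq> A - {a}" "\<forall>e\<in>E. endA e \<in> T \<longrightarrow> endB e \<noteq> b" using T(1) by auto
      ultimately show ?thesis using obstructed_if_deficient a b by blast
    qed
  qed
qed

end

theorem lemma2p4:
  fixes V A B :: "'v set" and E :: "'e set" and ends :: "'e \<Rightarrow> 'v set"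
    and a b :: 'v
  assumes "multigraph V E ends"
    and "connected_graph V E ends"
    and "cubic V E ends"
    and "bipartite_on V E ends A B"
    and "a \<in> A" and "b \<in> B"
  shows "\<not> lambda_matchable V E ends a b \<longleftrightarrow>
    (let P1 = (\<exists>e. {e'\<in>E. ends e' = {a, b}} = {e} \<and>
                  (\<exists>C. two_cut V E ends C \<and> e \<in> C));
         P2 = (\<not> (\<exists>e\<in>E. ends e = {a, b}) \<and>
               (\<exists>X\<subseteq>V. odd (card X) \<and> tight_cut V E ends (cut E ends X) \<and>
                   a \<in> minus_side A B X \<and> b \<in> minus_side A B (V - X)))
     in (P1 \<and> \<not> P2) \<or> (P2 \<and> \<not> P1))"
proof -
  interpret cubic_bipartite V E ends A B using assms(1-4) by (rule cubic_bipartite.intro)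
  note a = assms(5) and b = assms(6)
  let ?P1 = "\<exists>e. {e'\<in>E. ends e' = {a, b}} = {e} \<and> (\<exists>C. two_cut V E ends C \<and> e \<in> C)"
  let ?P2 = "\<not> (\<exists>e\<in>E. ends e = {a, b}) \<and>
    (\<exists>X\<subseteq>V. odd (card X) \<and> tight_cut V E ends (cut E ends X) \<and>
        a \<in> minus_side A B X \<and> b \<in> minus_side A B (V - X))"
  have P2_iff: "?P2 \<longleftrightarrow> \<not> (\<exists>e\<in>E. ends e = {a, b}) \<and> (\<exists>X. tight_shore X \<and> a \<in> X \<and> b \<notin> X)"
    using ex_tight_cut_minus_sides_iff[OF a b] by simp
  have "?P1 \<Longrightarrow> \<not> lambda_matchable V E ends a b"
    using not_ab_matching_if_two_cut[OF a b] unfolding lambda_matchable_def by blast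
  moreover have "?P2 \<Longrightarrow> \<not> lambda_matchable V E ends a b"
    using P2_iff not_ab_matching_if_tight_shore[OF _ a b] unfolding lambda_matchable_def by blast
  moreover have "\<not> lambda_matchable V E ends a b \<Longrightarrow> ?P1 \<or> ?P2"
    using obstructed_if_not_lambda_matchable[OF a b] P2_iff unfolding obstructed_def by blast
  moreover have "\<not> (?P1 \<and> ?P2)" by blast
  ultimately show ?thesis unfolding Let_def by blast
qed

end
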